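(* Let $G$ be the directed graph with distinct vertices $v_1,v_2,\dots$, $w_2,w_3,\dots$, and $u_2,u_3,\dots$; write $w_1:=v_1$. Its edges are $v_i\to v_{i+1}$ ($i\ge1$), $w_i\to w_{i+1}$ ($i\ge1$), $w_i\to u_i$ ($i\ge2$), and $u_i\to v_{i+1}$ ($i\ge2$), and birthdates are $t(v_i)=t(w_i)=i$, $t(u_i)=i+\tfrac12$. Then $(G,t)$ is an infinite biosphere, and $v_2$ does not belong to any maximal element of $\mathrm{IAP}\cap\mathrm{CA}\cap\mathrm{REF}$.
   Context: An infinite biosphere is a directed graph $G$ together with a function $t$ assigning a real number $t(v)$ to each vertex, such that: (1) if $v$ is a parent of $w$ (edge from $v$ to $w$) then $t(v)<t(w)$; (2) for every $r\in\mathbb R$ at most finitely many vertices $v$ have $t(v)<r$; (3) every vertex has finitely many children; (4) $G$ is infinite. $v$ is an ancestor of $w$ (and $w$ a descendant of $v$) if there is a directed path $v=v_1,\dots,v_n=w$ with $n>1$. $\mathrm{IAP}$: sets $S$ of vertices such that no $v\in S$ has both infinitely many descendants in $S$ and infinitely many non-descendants in $S$. $\mathrm{CA}$: sets $S$ for which there exists $v\in S$ such that every $w\in S$ with $w\neq v$ is a descendant of $v$. $\mathrm{REF}$: sets $S$ such that every $v\in S$ with infinitely many descendants in $G$ has infinitely many descendants in $S$. A maximal element of a family of sets is a member not properly contained in any other member. *)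

theory Defs
  imports Main Complex_Main
begin

definition biosphere :: "'a set \<Rightarrow> ('a \<times> 'a) set \<Rightarrow> ('a \<Rightarrow> real) \<Rightarrow> bool" where
  "biosphere VV E t \<longleftrightarrow>
     E \<subseteq> VV \<times> VV \<and>
     (\<forall>v w. (v, w) \<in> E \<longrightarrow> t v < t w) \<and>
     (\<forall>r::real. finite {v \<in> VV. t v < r}) \<and>
     (\<forall>v \<in> VV. finite {w. (v, w) \<in> E}) \<and>
     infinite VV"

definition descendants :: "('a \<times> 'a) set \<Rightarrow> 'a \<Rightarrow> 'a set" where
  "descendants E v = {w. (v, w) \<in> E\<^sup>+}"

definition IAP :: "'a set \<Rightarrow> ('a \<times> 'a) set \<Rightarrow> 'a set set" where
  "IAP VV E = {S. S \<subseteq> VV \<and>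
     \<not> (\<exists>v \<in> S. infinite (S \<inter> descendants E v) \<and> infinite (S - descendants E v))}"

definition CA :: "'a set \<Rightarrow> ('a \<times> 'a) set \<Rightarrow> 'a set set" where
  "CA VV E = {S. S \<subseteq> VV \<and> (\<exists>v \<in> S. \<forall>w \<in> S. w \<noteq> v \<longrightarrow> w \<in> descendants E v)}"

definition REF :: "'a set \<Rightarrow> ('a \<times> 'a) set \<Rightarrow> 'a set set" where
  "REF VV E = {S. S \<subseteq> VV \<and>
     (\<forall>v \<in> S. infinite (descendants E v) \<longrightarrow> infinite (S \<inter> descendants E v))}"

definition maximal_in :: "'a set \<Rightarrow> 'a set set \<Rightarrow> bool" where
  "maximal_in M F \<longleftrightarrow> M \<in> F \<and> \<not> (\<exists>S \<in> F. M \<subset> S)"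

text \<open>Vertices: V i = v_i (i \<ge> 1), W i = w_i (i \<ge> 2), U i = u_i (i \<ge> 2).\<close>
datatype vtx = V nat | W nat | U nat

definition exVerts :: "vtx set" where
  "exVerts = {V i |i. i \<ge> 1} \<union> {W i |i. i \<ge> 2} \<union> {U i |i. i \<ge> 2}"

definition wv :: "nat \<Rightarrow> vtx" where
  "wv i = (if i = 1 then V 1 else W i)"

definition exEdges :: "(vtx \<times> vtx) set" where
  "exEdges = {(V i, V (i + 1)) |i. i \<ge> 1}
           \<union> {(wv i, wv (i + 1)) |i. i \<ge> 1}
           \<union> {(W i, U i) |i. i \<ge> 2}
           \<union> {(U i, V (i + 1)) |i. i \<ge> 2}"

fun exT :: "vtx \<Rightarrow> real" where
  "exT (V i) = real i"
| "exT (W i) = real i"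
| "exT (U i) = real i + 1 / 2"

end

theory Submission
  imports Defs
begin

(* Let M be in IAP \<inter> CA \<inter> REF with v_2 \<in> M. The descendants of v_2 are exactly the v_j with
   j > 2, so REF puts infinitely many of them into M, and then IAP leaves only finitely many
   elements of M outside them. The only proper ancestor of v_2 is v_1, so the CA root of M is
   v_1 or v_2. If v_1 \<notin> M, everything in M lies below v_1 and M \<union> {v_1} is still in the
   family. If v_1 \<in> M, some w_k (k \<ge> 2) is missing from M, as the w's are not below v_2;
   M \<union> {w_k} is still in the family because w_k lies below v_1, has all v_j with j > k
   as descendants, and so has only finitely many non-descendants in M \<union> {w_k}. Either way M
   is not maximal. *)

lemma descendants_trans:
  "w \<in> descendants E v \<Longrightarrow> descendants E w \<subseteq> descendants E v"
  unfolding descendants_def by auto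

lemma IAP_insert:
  assumes "S \<in> IAP VV E" "x \<in> VV"
    and "finite (insert x S \<inter> descendants E x) \<or> finite (insert x S - descendants E x)"
  shows "insert x S \<in> IAP VV E"
proof -
  have "finite (insert x S \<inter> descendants E v) \<or> finite (insert x S - descendants E v)"
    if "v \<in> S" for v
  proof -
    have "finite (S \<inter> descendants E v) \<or> finite (S - descendants E v)"
      using assms(1) that unfolding IAP_def by auto
    moreover have "insert x S \<inter> descendants E v \<subseteq> insert x (S \<inter> descendants E v)"
      and "insert x S - descendants E v \<subseteq> insert x (S - descendants E v)" by auto
    ultimately show ?thesis by (meson finite_insert finite_subset)
  qed
  then show ?thesis using assms unfolding IAP_def by auto
qed

lemma REF_infinite_inter_descendants:
  assumes "S \<in> REF VV E" "v \<in> S" "infinite (descendants E v)"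
  shows "infinite (S \<inter> descendants E v)"
  using assms unfolding REF_def by blast

lemma REF_insert:
  assumes "S \<in> REF VV E" "x \<in> VV"
    and "infinite (descendants E x) \<Longrightarrow> infinite (insert x S \<inter> descendants E x)"
  shows "insert x S \<in> REF VV E"
proof -
  have "infinite (insert x S \<inter> descendants E v)"
    if "v \<in> S" "infinite (descendants E v)" for v
  proof -
    have "infinite (S \<inter> descendants E v)"
      using assms(1) that by (rule REF_infinite_inter_descendants)
    then show ?thesis by (rule infinite_super[rotated]) auto
  qed
  then show ?thesis using assms unfolding REF_def by auto
qed

lemma IAP_REF_finite_diff_descendants:
  assumes "S \<in> IAP VV E" "S \<in> REF VV E" "v \<in> S" "infinite (descendants E v)"
  shows "finite (S - descendants E v)"
  using assms(1,3) REF_infinite_inter_descendants[OF assms(2-4)] unfolding IAP_def by blast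

lemma maximal_in_insertD:
  "maximal_in M F \<Longrightarrow> insert x M \<in> F \<Longrightarrow> x \<in> M"
  unfolding maximal_in_def by blast

lemma exEdges_iff:
  "(x, y) \<in> exEdges \<longleftrightarrow>
    (\<exists>i\<ge>1. x = V i \<and> y = V (i + 1)) \<or> (x = V 1 \<and> y = W 2) \<or>
    (\<exists>i\<ge>2. x = W i \<and> y = W (i + 1)) \<or> (\<exists>i\<ge>2. x = W i \<and> y = U i) \<or>
    (\<exists>i\<ge>2. x = U i \<and> y = V (i + 1))" (is "_ \<longleftrightarrow> ?cases")
proof
  show "(x, y) \<in> exEdges \<Longrightarrow> ?cases"
    unfolding exEdges_def wv_def by (auto split: if_splits)
  have "(V 1, W 2) = (wv 1, wv (1 + 1))"
    and "2 \<le> i \<Longrightarrow> (W i, W (i + 1)) = (wv i, wv (i + 1)) \<and> 1 \<le> i" for i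
    by (simp_all add: wv_def)
  then show "?cases \<Longrightarrow> (x, y) \<in> exEdges"
    unfolding exEdges_def by blast
qed

lemma finite_exT_less: "finite {v \<in> exVerts. exT v < r}"
proof -
  define n where "n = nat \<lceil>r\<rceil>"
  have le_n: "real i < r \<Longrightarrow> i \<le> n" for i
    unfolding n_def by linarith
  have "exT v < r \<Longrightarrow> v \<in> V ` {..n} \<union> W ` {..n} \<union> U ` {..n}" for v
    by (cases v) (auto intro!: le_n)
  then have "{v \<in> exVerts. exT v < r} \<subseteq> V ` {..n} \<union> W ` {..n} \<union> U ` {..n}"
    by blast
  then show ?thesis by (rule finite_subset) simp
qed

lemma infinite_image_V: "infinite A \<Longrightarrow> infinite (V ` A)"
  and infinite_image_W: "infinite A \<Longrightarrow> infinite (W ` A)"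
  by (auto dest!: finite_imageD simp: inj_on_def)

lemma exVerts_iff:
  "v \<in> exVerts \<longleftrightarrow> (case v of V i \<Rightarrow> 1 \<le> i | W i \<Rightarrow> 2 \<le> i | U i \<Rightarrow> 2 \<le> i)"
  by (cases v) (auto simp: exVerts_def)

lemma exEdges_subset: "exEdges \<subseteq> exVerts \<times> exVerts"
  by (auto simp: exEdges_iff exVerts_iff)

lemma exT_edge_less: "(v, w) \<in> exEdges \<Longrightarrow> exT v < exT w"
  and exT_edge_le: "(v, w) \<in> exEdges \<Longrightarrow> exT w \<le> exT v + 1"
  by (auto simp: exEdges_iff)

lemma biosphere_example: "biosphere exVerts exEdges exT"
  unfolding biosphere_def
proof (intro conjI allI ballI impI exEdges_subset)
  show "(v, w) \<in> exEdges \<Longrightarrow> exT v < exT w" for v w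
    by (rule exT_edge_less)
  show "finite {v \<in> exVerts. exT v < r}" for r
    by (rule finite_exT_less)
  show "finite {w. (v, w) \<in> exEdges}" for v
  proof (rule finite_subset)
    show "{w. (v, w) \<in> exEdges} \<subseteq> {x \<in> exVerts. exT x < exT v + 2}"
      using exEdges_subset exT_edge_le by fastforce
  qed (rule finite_exT_less)
  have "V ` {1..} \<subseteq> exVerts" by (auto simp: exVerts_iff)
  then show "infinite exVerts"
    using infinite_image_V[OF infinite_Ici] infinite_super by blast
qed

lemma exEdges_intros:
  "1 \<le> i \<Longrightarrow> (V i, V (Suc i)) \<in> exEdges"
  "(V 1, W 2) \<in> exEdges"
  "2 \<le> i \<Longrightarrow> (W i, W (Suc i)) \<in> exEdges"
  "2 \<le> i \<Longrightarrow> (W i, U i) \<in> exEdges"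
  "2 \<le> i \<Longrightarrow> (U i, V (Suc i)) \<in> exEdges"
  by (simp_all add: exEdges_iff)

lemma V_in_descendants_V:
  assumes "1 \<le> i" "i < j"
  shows "V j \<in> descendants exEdges (V i)"
proof -
  have "Suc i \<le> j" using assms(2) by simp
  then show ?thesis
  proof (induction j rule: dec_induct)
    case base
    show ?case using exEdges_intros(1)[OF assms(1)] by (simp add: descendants_def)
  next
    case (step j)
    then have "(V j, V (Suc j)) \<in> exEdges" using assms(1) by (simp add: exEdges_intros)
    with step.IH show ?case by (simp add: descendants_def)
  qed
qed

lemma W_in_descendants_V1:
  assumes "2 \<le> k"
  shows "W k \<in> descendants exEdges (V 1)"
  using assms
proof (induction k rule: dec_induct)
  case base
  show ?case using exEdges_intros(2) by (simp add: descendants_def)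
next
  case (step k)
  then have "(W k, W (Suc k)) \<in> exEdges" by (simp add: exEdges_intros)
  with step.IH show ?case by (simp add: descendants_def)
qed

lemma V_in_descendants_W:
  assumes "2 \<le> k"
  shows "V ` {k<..} \<subseteq> descendants exEdges (W k)"
proof -
  have "(W k, U k) \<in> exEdges" "(U k, V (Suc k)) \<in> exEdges"
    using assms by (simp_all add: exEdges_intros)
  then have first: "V (Suc k) \<in> descendants exEdges (W k)"
    by (auto simp: descendants_def)
  have "V j \<in> descendants exEdges (W k)" if "k < j" for j
  proof (cases "j = Suc k")
    case False
    then have "V j \<in> descendants exEdges (V (Suc k))"
      using assms that by (intro V_in_descendants_V) auto
    then show ?thesis using descendants_trans[OF first] by blast
  qed (use first in simp)
  then show ?thesis by blast
qed

lemma descendants_V: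
  assumes "2 \<le> i"
  shows "descendants exEdges (V i) = V ` {i<..}"
proof
  have "(V i, y) \<in> exEdges\<^sup>+ \<Longrightarrow> y \<in> V ` {i<..}" for y
  proof (induction y rule: trancl_induct)
    case (base y)
    then show ?case using assms by (auto simp: exEdges_iff)
  next
    case (step y z)
    then show ?case using assms by (auto simp: exEdges_iff)
  qed
  then show "descendants exEdges (V i) \<subseteq> V ` {i<..}"
    by (auto simp: descendants_def)
  show "V ` {i<..} \<subseteq> descendants exEdges (V i)"
    using assms V_in_descendants_V by auto
qed

lemma infinite_descendants_V:
  "2 \<le> i \<Longrightarrow> infinite (descendants exEdges (V i))"
  by (simp add: descendants_V infinite_image_V infinite_Ioi)

lemma ancestor_V2:
  assumes "V 2 \<in> descendants exEdges r"
  shows "r = V 1"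
proof -
  have no_parent_V1: "(x, V 1) \<notin> exEdges" for x
    by (simp add: exEdges_iff)
  from assms obtain p where "(p, V 2) \<in> exEdges" "p = r \<or> (r, p) \<in> exEdges\<^sup>+"
    unfolding descendants_def by (blast elim: tranclE)
  moreover from this have "p = V 1" by (simp add: exEdges_iff)
  ultimately show ?thesis
    using no_parent_V1 by (auto elim: tranclE)
qed

abbreviation exFamily :: "vtx set set" where
  "exFamily \<equiv> IAP exVerts exEdges \<inter> CA exVerts exEdges \<inter> REF exVerts exEdges"

lemma CA_root_V1_or_V2:
  assumes "M \<in> CA exVerts exEdges" "V 2 \<in> M"
  obtains r where "r = V 1 \<or> r = V 2" "r \<in> M" "M - {r} \<subseteq> descendants exEdges r"
proof -
  from assms(1) obtain r where r: "r \<in> M" "M - {r} \<subseteq> descendants exEdges r"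
    unfolding CA_def by blast
  then have "r = V 1 \<or> r = V 2"
    using assms(2) ancestor_V2 by blast
  with r that show ?thesis by blast
qed

lemma insert_V1_in_exFamily:
  assumes "M \<in> exFamily" "V 2 \<in> M" "V 1 \<notin> M"
  shows "insert (V 1) M \<in> exFamily"
proof -
  have M: "M \<in> IAP exVerts exEdges" "M \<in> CA exVerts exEdges" "M \<in> REF exVerts exEdges"
    using assms(1) by simp_all
  have V1: "V 1 \<in> exVerts" by (simp add: exVerts_iff)
  have V2_below_V1: "V 2 \<in> descendants exEdges (V 1)"
    by (simp add: V_in_descendants_V)
  obtain r where "r = V 1 \<or> r = V 2" "r \<in> M" "M - {r} \<subseteq> descendants exEdges r"
    using M(2) assms(2) CA_root_V1_or_V2 by blast
  with assms(3) have "M - {V 2} \<subseteq> descendants exEdges (V 2)" by blast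
  then have M_below_V1: "M \<subseteq> descendants exEdges (V 1)"
    using V2_below_V1 descendants_trans[OF V2_below_V1] by blast
  have "M \<inter> descendants exEdges (V 2) \<subseteq> insert (V 1) M \<inter> descendants exEdges (V 1)"
    using descendants_trans[OF V2_below_V1] by blast
  moreover have "infinite (M \<inter> descendants exEdges (V 2))"
    using M(3) assms(2) by (rule REF_infinite_inter_descendants) (simp add: infinite_descendants_V)
  ultimately have "infinite (insert (V 1) M \<inter> descendants exEdges (V 1))"
    by (rule infinite_super)
  then have "insert (V 1) M \<in> REF exVerts exEdges"
    by (rule REF_insert[OF M(3) V1])
  have "insert (V 1) M - descendants exEdges (V 1) \<subseteq> {V 1}"
    using M_below_V1 by blast
  then have "finite (insert (V 1) M - descendants exEdges (V 1))"
    by (rule finite_subset) simp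
  then have "insert (V 1) M \<in> IAP exVerts exEdges"
    by (intro IAP_insert[OF M(1) V1] disjI2)
  moreover have "insert (V 1) M \<in> CA exVerts exEdges"
    using M(2) V1 M_below_V1 unfolding CA_def by blast
  ultimately show ?thesis
    using \<open>insert (V 1) M \<in> REF exVerts exEdges\<close> by blast
qed

lemma insert_W_in_exFamily:
  assumes "M \<in> exFamily" "V 2 \<in> M" "V 1 \<in> M"
  obtains k where "W k \<notin> M" "insert (W k) M \<in> exFamily"
proof -
  have M: "M \<in> IAP exVerts exEdges" "M \<in> CA exVerts exEdges" "M \<in> REF exVerts exEdges"
    using assms(1) by simp_all
  have inf_V2: "infinite (descendants exEdges (V 2))"
    by (simp add: infinite_descendants_V)
  obtain r where r: "r = V 1 \<or> r = V 2" "r \<in> M" "M - {r} \<subseteq> descendants exEdges r"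
    using M(2) assms(2) CA_root_V1_or_V2 by blast
  have "r = V 1"
  proof (rule ccontr)
    assume "r \<noteq> V 1"
    then have "V 1 \<in> descendants exEdges (V 2)"
      using r assms(3) by auto
    then show False by (auto simp: descendants_V)
  qed
  with r(3) have root: "M - {V 1} \<subseteq> descendants exEdges (V 1)" by simp
  have "finite (M - descendants exEdges (V 2))"
    using M(1,3) assms(2) inf_V2 by (rule IAP_REF_finite_diff_descendants)
  then have finite_rest: "finite (M - V ` {2<..})"
    by (simp add: descendants_V)
  have "\<not> W ` {2..} \<subseteq> M - V ` {2<..}"
    using finite_rest infinite_image_W[OF infinite_Ici] finite_subset by blast
  then obtain k where k: "2 \<le> k" "W k \<notin> M" by auto
  have Wk: "W k \<in> exVerts" using k(1) by (simp add: exVerts_iff)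
  note below_Wk = V_in_descendants_W[OF k(1)]
  have V_split: "V ` {2<..} \<subseteq> V ` {..k} \<union> V ` {k<..}"
    unfolding image_Un[symmetric] by (rule image_mono) auto
  have "infinite (M \<inter> descendants exEdges (V 2))"
    using M(3) assms(2) inf_V2 by (rule REF_infinite_inter_descendants)
  then have "infinite (M \<inter> V ` {2<..})"
    by (simp add: descendants_V)
  then have "infinite (M \<inter> V ` {2<..} - V ` {..k})"
    by (simp add: finite_imageI)
  moreover have "M \<inter> V ` {2<..} - V ` {..k} \<subseteq> insert (W k) M \<inter> descendants exEdges (W k)"
    using below_Wk V_split by blast
  ultimately have "infinite (insert (W k) M \<inter> descendants exEdges (W k))"
    using infinite_super by blast
  then have "insert (W k) M \<in> REF exVerts exEdges"
    by (rule REF_insert[OF M(3) Wk])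
  have "insert (W k) M - descendants exEdges (W k) \<subseteq> insert (W k) ((M - V ` {2<..}) \<union> V ` {..k})"
    using below_Wk V_split by blast
  then have "finite (insert (W k) M - descendants exEdges (W k))"
    by (rule finite_subset) (simp add: finite_rest)
  then have "insert (W k) M \<in> IAP exVerts exEdges"
    by (intro IAP_insert[OF M(1) Wk] disjI2)
  moreover have "insert (W k) M \<in> CA exVerts exEdges"
    using M(2) assms(3) root Wk W_in_descendants_V1[OF k(1)] unfolding CA_def by blast
  ultimately show ?thesis
    using \<open>insert (W k) M \<in> REF exVerts exEdges\<close> k(2) that by blast
qed

theorem mainTheorem12:
  shows "biosphere exVerts exEdges exT \<and>
         \<not> (\<exists>M. maximal_in M (IAP exVerts exEdges \<inter> CA exVerts exEdges \<inter> REF exVerts exEdges)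
                 \<and> V 2 \<in> M)"
proof (intro conjI notI)
  show "biosphere exVerts exEdges exT" by (rule biosphere_example)
next
  assume "\<exists>M. maximal_in M exFamily \<and> V 2 \<in> M"
  then obtain M where max: "maximal_in M exFamily" and V2: "V 2 \<in> M" by blast
  then have M: "M \<in> exFamily" by (simp add: maximal_in_def)
  show False
  proof (cases "V 1 \<in> M")
    case True
    then obtain k where "W k \<notin> M" "insert (W k) M \<in> exFamily"
      using insert_W_in_exFamily M V2 by blast
    then show False using maximal_in_insertD[OF max] by blast
  next
    case False
    then show False
      using insert_V1_in_exFamily[OF M V2] maximal_in_insertD[OF max] by blast
  qed
qed

end
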